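(* Let $d,r$ be positive integers, $n=dr$, and let $\gamma\in\mathcal S_n$ have cycle structure $d^r$. Suppose $(\varepsilon,\varepsilon,\gamma;(123))\in\mathrm{Par}(n)$. Then: <ul> <li>(i) if $3\mid d$ then $3\mid r$;</li> <li>(ii) if $6\mid d$ then $6\mid r$.</li> </ul>
   Context: A Latin square of order $n$ is an $n\times n$ array with rows, columns and symbols indexed by $[n]$, each symbol occurring once in each row and each column, with triple set $O(L)$. Permutations act on the right; $\varepsilon$ is the identity. A paratopism $(\alpha,\beta,\gamma;(123))$ maps $L$ to $L^\sigma$ with triple set $\{(z\gamma,x\alpha,y\beta):(x,y,z)\in O(L)\}$; it is an autoparatopism of $L$ if $L^\sigma=L$. $\mathrm{Par}(n)$ is the set of paratopisms that are autoparatopisms of at least one Latin square of order $n$. *)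

theory Defs
  imports "HOL-Combinatorics.Combinatorics"
begin

(* A Latin square of order n is represented by its triple set
   O(L) \<subseteq> [n]^3: each (row, column) cell holds exactly one symbol, each symbol
   occurs exactly once in each row and exactly once in each column. *)
definition latin_square :: "nat \<Rightarrow> (nat \<times> nat \<times> nat) set \<Rightarrow> bool" where
  "latin_square n T \<longleftrightarrow>
     T \<subseteq> {1..n} \<times> {1..n} \<times> {1..n} \<and>
     (\<forall>x\<in>{1..n}. \<forall>y\<in>{1..n}. \<exists>!z. (x, y, z) \<in> T) \<and>
     (\<forall>x\<in>{1..n}. \<forall>z\<in>{1..n}. \<exists>!y. (x, y, z) \<in> T) \<and>
     (\<forall>y\<in>{1..n}. \<forall>z\<in>{1..n}. \<exists>!x. (x, y, z) \<in> T)"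

(* L^\<sigma> for \<sigma> = (\<alpha>,\<beta>,\<gamma>;(123)): triples (z\<gamma>, x\<alpha>, y\<beta>); right action x\<alpha> = \<alpha> x *)
definition para_123 ::
  "(nat \<Rightarrow> nat) \<Rightarrow> (nat \<Rightarrow> nat) \<Rightarrow> (nat \<Rightarrow> nat) \<Rightarrow> (nat \<times> nat \<times> nat) set \<Rightarrow> (nat \<times> nat \<times> nat) set" where
  "para_123 \<alpha> \<beta> \<gamma> T = {(\<gamma> z, \<alpha> x, \<beta> y) | x y z. (x, y, z) \<in> T}"

definition in_Par_123 :: "nat \<Rightarrow> (nat \<Rightarrow> nat) \<Rightarrow> (nat \<Rightarrow> nat) \<Rightarrow> (nat \<Rightarrow> nat) \<Rightarrow> bool" where
  "in_Par_123 n \<alpha> \<beta> \<gamma> \<longleftrightarrow>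
     \<alpha> permutes {1..n} \<and> \<beta> permutes {1..n} \<and> \<gamma> permutes {1..n} \<and>
     (\<exists>T. latin_square n T \<and> para_123 \<alpha> \<beta> \<gamma> T = T)"

definition cycle_len :: "(nat \<Rightarrow> nat) \<Rightarrow> nat \<Rightarrow> nat" where
  "cycle_len \<gamma> x = (LEAST k. 0 < k \<and> (\<gamma> ^^ k) x = x)"

definition cycle_structure :: "nat \<Rightarrow> (nat \<Rightarrow> nat) \<Rightarrow> nat \<Rightarrow> nat \<Rightarrow> bool" where
  "cycle_structure n \<gamma> d r \<longleftrightarrow>
     \<gamma> permutes {1..n} \<and> d * r = n \<and> (\<forall>x\<in>{1..n}. cycle_len \<gamma> x = d)"

end

theory Submission
  imports Defs
begin

text \<open>
  If \<open>(\<epsilon>,\<epsilon>,\<gamma>;(123))\<close> fixes \<open>L\<close>, then \<open>\<sigma>(x,y,z) = (\<gamma>z,x,y)\<close> permutes \<open>L\<close> and \<open>\<sigma>\<^sup>3\<close> applies \<open>\<gamma>\<close>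
  to all three coordinates. Pick a representative in each cycle of \<open>\<gamma>\<close> and let the phase of a
  point be its position in its cycle, an integer in \<open>[0,d)\<close>. The triples whose row is a
  representative form a transversal \<open>T\<close> of the \<open>\<gamma>\<close>-orbits on \<open>L\<close>, and \<open>\<sigma>\<close> induces on \<open>T\<close> a
  map \<open>\<psi>\<close> of order 3, without fixed points when \<open>3 | d\<close>. Along each \<open>\<psi>\<close>-orbit both the
  column phases and the differences symbol phase minus column phase sum to \<open>-1\<close> mod \<open>d\<close>.
  Every row meets each column and each symbol once, so the differences sum to \<open>0\<close> over \<open>T\<close>:
  the number \<open>m\<close> of orbits is divisible by \<open>d\<close>, and \<open>3m = |T| = r n = d r\<^sup>2\<close> gives \<open>3 | r\<close>.
  For even \<open>d\<close>, the column phases over \<open>T\<close> sum to \<open>r\<^sup>2 d (d - 1) / 2 \<equiv> -m \<equiv> 0\<close> mod \<open>d\<close>, which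
  forces \<open>r\<close> to be even.
\<close>

lemma order3_orbit_closed:
  assumes "f ` A \<subseteq> A" and "\<forall>x\<in>A. f (f (f x)) = x" and "x \<in> A"
  shows "f ` (A - {x, f x, f (f x)}) \<subseteq> A - {x, f x, f (f x)}"
proof (intro image_subsetI DiffI)
  fix y assume y: "y \<in> A - {x, f x, f (f x)}"
  then show "f y \<in> A"
    using assms(1) by blast
  show "f y \<notin> {x, f x, f (f x)}"
  proof
    assume "f y \<in> {x, f x, f (f x)}"
    then have "f (f (f y)) \<in> {f (f x), f (f (f x)), f (f (f (f x)))}"
      by auto
    also have "\<dots> = {x, f x, f (f x)}"
      using assms(2,3) by auto
    finally show False
      using y assms(2) by auto
  qed
qed

lemma order3_transversal:
  fixes f :: "'a \<Rightarrow> 'a"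
  assumes "finite A" and "f ` A \<subseteq> A" and "\<forall>x\<in>A. f (f (f x)) = x" and "\<forall>x\<in>A. f x \<noteq> x"
  shows "\<exists>R\<subseteq>A. card A = 3 * card R \<and>
           (\<forall>F :: 'a \<Rightarrow> 'b::comm_monoid_add. sum F A = (\<Sum>x\<in>R. F x + F (f x) + F (f (f x))))"
  using assms
proof (induction A rule: finite_psubset_induct)
  case (psubset A)
  show ?case
  proof (cases "A = {}")
    case True
    then show ?thesis by auto
  next
    case False
    then obtain x where x: "x \<in> A" by blast
    define C where "C = {x, f x, f (f x)}"
    have fx: "f x \<in> A" "f (f x) \<in> A"
      using x psubset.prems(1) by auto
    then have "C \<subseteq> A"
      unfolding C_def using x by simp
    have distinct: "f x \<noteq> x" "f (f x) \<noteq> f x" "f (f x) \<noteq> x"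
    proof -
      show "f x \<noteq> x" "f (f x) \<noteq> f x"
        using x fx psubset.prems(3) by auto
      show "f (f x) \<noteq> x"
      proof
        assume "f (f x) = x"
        then have "f x = f (f (f x))" by simp
        with \<open>f x \<noteq> x\<close> show False
          using x psubset.prems(2) by simp
      qed
    qed
    have "A - C \<subset> A"
      using x unfolding C_def by blast
    moreover have "f ` (A - C) \<subseteq> A - C"
      unfolding C_def by (rule order3_orbit_closed[OF psubset.prems(1,2) x])
    ultimately obtain R where R: "R \<subseteq> A - C" "card (A - C) = 3 * card R"
      "\<forall>F :: 'a \<Rightarrow> 'b. sum F (A - C) = (\<Sum>x\<in>R. F x + F (f x) + F (f (f x)))"
      using psubset.IH[of "A - C"] psubset.prems(2,3) by blast
    have "x \<notin> R" "finite R"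
      using R(1) psubset.hyps finite_subset unfolding C_def by auto
    have "card A = card C + card (A - C)"
      using card_Diff_subset[OF _ \<open>C \<subseteq> A\<close>] card_mono[OF psubset.hyps \<open>C \<subseteq> A\<close>]
      unfolding C_def by simp
    moreover have "card C = 3"
      unfolding C_def using distinct by auto
    ultimately have "card A = 3 * card (insert x R)"
      using R(2) \<open>x \<notin> R\<close> \<open>finite R\<close> by simp
    moreover have "sum F A = (\<Sum>x\<in>insert x R. F x + F (f x) + F (f (f x)))" for F :: "'a \<Rightarrow> 'b"
    proof -
      have "sum F A = sum F C + sum F (A - C)"
        using sum.subset_diff[OF \<open>C \<subseteq> A\<close> psubset.hyps] by (simp add: add.commute)
      also have "sum F C = F x + F (f x) + F (f (f x))"
        unfolding C_def using distinct by (simp add: add.assoc)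
      finally show ?thesis
        using R(3) \<open>x \<notin> R\<close> \<open>finite R\<close> by simp
    qed
    moreover have "insert x R \<subseteq> A"
      using x R(1) by blast
    ultimately show ?thesis
      by blast
  qed
qed

lemma latin_squareD:
  assumes "latin_square n L"
  shows "L \<subseteq> {1..n} \<times> {1..n} \<times> {1..n}"
    and "x \<in> {1..n} \<Longrightarrow> y \<in> {1..n} \<Longrightarrow> \<exists>!z. (x, y, z) \<in> L"
    and "x \<in> {1..n} \<Longrightarrow> z \<in> {1..n} \<Longrightarrow> \<exists>!y. (x, y, z) \<in> L"
  using assms unfolding latin_square_def by simp_all

lemma latin_square_triple_in:
  assumes "latin_square n L" and "(x, y, z) \<in> L"
  shows "x \<in> {1..n}" "y \<in> {1..n}" "z \<in> {1..n}"
  using latin_squareD(1)[OF assms(1)] assms(2) by auto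

lemma latin_square_row_bij_col:
  assumes L: "latin_square n L" and x: "x \<in> {1..n}"
  shows "bij_betw fst {(y, z). (x, y, z) \<in> L} {1..n}"
proof (rule bij_betwI')
  show "fst p = fst q \<longleftrightarrow> p = q" if pq: "p \<in> {(y, z). (x, y, z) \<in> L}" "q \<in> {(y, z). (x, y, z) \<in> L}" for p q
  proof -
    obtain y z y' z' where p: "p = (y, z)" "(x, y, z) \<in> L" and q: "q = (y', z')" "(x, y', z') \<in> L"
      using pq by (cases p; cases q) auto
    have "z = z'" if "y = y'"
      using latin_squareD(2)[OF L x latin_square_triple_in(2)[OF L p(2)]] p(2) q(2) that by blast
    then show ?thesis
      using p q by auto
  qed
  show "fst p \<in> {1..n}" if "p \<in> {(y, z). (x, y, z) \<in> L}" for p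
    using that latin_square_triple_in[OF L] by (cases p) auto
  show "\<exists>p\<in>{(y, z). (x, y, z) \<in> L}. y = fst p" if "y \<in> {1..n}" for y
    using latin_squareD(2)[OF L x that] by auto
qed

lemma latin_square_row_bij_sym:
  assumes L: "latin_square n L" and x: "x \<in> {1..n}"
  shows "bij_betw snd {(y, z). (x, y, z) \<in> L} {1..n}"
proof (rule bij_betwI')
  show "snd p = snd q \<longleftrightarrow> p = q" if pq: "p \<in> {(y, z). (x, y, z) \<in> L}" "q \<in> {(y, z). (x, y, z) \<in> L}" for p q
  proof -
    obtain y z y' z' where p: "p = (y, z)" "(x, y, z) \<in> L" and q: "q = (y', z')" "(x, y', z') \<in> L"
      using pq by (cases p; cases q) auto
    have "y = y'" if "z = z'"
      using latin_squareD(3)[OF L x latin_square_triple_in(3)[OF L p(2)]] p(2) q(2) that by blast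
    then show ?thesis
      using p q by auto
  qed
  show "snd p \<in> {1..n}" if "p \<in> {(y, z). (x, y, z) \<in> L}" for p
    using that latin_square_triple_in[OF L] by (cases p) auto
  show "\<exists>p\<in>{(y, z). (x, y, z) \<in> L}. z = snd p" if "z \<in> {1..n}" for z
    using latin_squareD(3)[OF L x that] by auto
qed

lemma sum_latin_square_rows:
  fixes h :: "nat \<Rightarrow> 'b::semiring_1"
  assumes "latin_square n L" and "X \<subseteq> {1..n}"
    and bij: "\<And>x. x \<in> {1..n} \<Longrightarrow> bij_betw p {(y, z). (x, y, z) \<in> L} {1..n}"
  shows "(\<Sum>w\<in>{w \<in> L. fst w \<in> X}. h (p (snd w))) = of_nat (card X) * sum h {1..n}"
proof -
  define R where "R x = {(y, z). (x, y, z) \<in> L}" for x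
  have "{w \<in> L. fst w \<in> X} = Sigma X R"
    unfolding R_def by auto
  moreover have "finite X" "\<And>x. finite (R x)"
    using assms(2) finite_subset latin_square_triple_in[OF assms(1)]
    by (auto intro: finite_subset[of _ "{1..n} \<times> {1..n}"] simp: R_def)
  ultimately have "(\<Sum>w\<in>{w \<in> L. fst w \<in> X}. h (p (snd w))) = (\<Sum>x\<in>X. \<Sum>q\<in>R x. h (p q))"
    by (simp add: sum.Sigma case_prod_unfold)
  also have "\<dots> = (\<Sum>x\<in>X. sum h {1..n})"
    unfolding R_def using assms(2) by (intro sum.cong[OF refl] sum.reindex_bij_betw bij) blast
  finally show ?thesis
    by simp
qed

lemma eq_modE:
  fixes a b m :: int
  assumes "b = a mod m"
  obtains k where "b = a + m * k"
  using assms minus_mult_div_eq_mod[of a m] that[of "- (a div m)"] by simp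

lemma sum_mod_eq_card_mult:
  fixes G :: "'a \<Rightarrow> int"
  assumes "\<forall>x\<in>R. G x mod m = c mod m"
  shows "sum G R mod m = (int (card R) * c) mod m"
proof -
  have "sum G R mod m = (\<Sum>x\<in>R. G x mod m) mod m"
    by (simp add: mod_sum_eq)
  also have "\<dots> = (\<Sum>x\<in>R. c mod m) mod m"
    using assms by simp
  also have "\<dots> = (int (card R) * c) mod m"
    by (simp add: mod_mult_right_eq)
  finally show ?thesis .
qed

lemma three_dvd_square:
  fixes k :: nat
  assumes "3 dvd k * k" shows "3 dvd k"
proof -
  have "k mod 3 * (k mod 3) mod 3 = 0"
    using assms by (simp add: mod_mult_eq dvd_eq_mod_eq_0)
  moreover have "k mod 3 = 0 \<or> k mod 3 = 1 \<or> k mod 3 = 2"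
    by presburger
  ultimately show ?thesis
    by (elim disjE) (simp_all add: dvd_eq_mod_eq_0)
qed

lemma para_123_fixed_closed:
  assumes "para_123 \<alpha> \<beta> \<gamma> T = T" and "(x, y, z) \<in> T"
  shows "(\<gamma> z, \<alpha> x, \<beta> y) \<in> T"
  using assms unfolding para_123_def by blast

locale uniform_cycles =
  fixes S :: "nat set" and g :: "nat \<Rightarrow> nat" and d :: nat
  assumes permutes: "g permutes S"
    and finite: "finite S"
    and d_pos: "0 < d"
    and cycle_len: "\<And>x. x \<in> S \<Longrightarrow> cycle_len g x = d"
begin

lemma permutation: "permutation g"
  using permutes finite permutation_permutes by blast

lemma funpow_in: "x \<in> S \<Longrightarrow> (g ^^ k) x \<in> S"
  using permutes_in_funpow_image[OF permutes] .

lemma funpow_cycle_len: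
  assumes "x \<in> S" shows "(g ^^ d) x = x"
proof -
  obtain k where "0 < k" "(g ^^ k) x = x"
    using permutation_self[OF permutation] .
  then have "0 < k \<and> (g ^^ k) x = x" by simp
  then have "0 < cycle_len g x \<and> (g ^^ cycle_len g x) x = x"
    unfolding cycle_len_def by (rule LeastI)
  then show ?thesis
    using cycle_len[OF assms] by simp
qed

lemma funpow_eq_self_iff:
  assumes "x \<in> S" shows "(g ^^ k) x = x \<longleftrightarrow> d dvd k"
proof
  assume "(g ^^ k) x = x"
  then have "(g ^^ (k mod d)) x = x"
    using funpow_mod_eq[where f=g and n=d and m=k and x=x] funpow_cycle_len[OF assms] by simp
  moreover have "\<not> (0 < k mod d \<and> (g ^^ (k mod d)) x = x)"
    using not_less_Least[of "k mod d" "\<lambda>k. 0 < k \<and> (g ^^ k) x = x"] d_pos cycle_len[OF assms]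
    unfolding cycle_len_def by simp
  ultimately show "d dvd k"
    by (simp add: dvd_eq_mod_eq_0)
next
  assume "d dvd k"
  then show "(g ^^ k) x = x"
    using funpow_mod_eq[where f=g and n=d and m=k and x=x] funpow_cycle_len[OF assms] by simp
qed

lemma funpow_eq_iff_mod_eq:
  assumes "x \<in> S" shows "(g ^^ i) x = (g ^^ j) x \<longleftrightarrow> i mod d = j mod d"
proof -
  have *: "(g ^^ i) x = (g ^^ j) x \<longleftrightarrow> i mod d = j mod d" if "i \<le> j" for i j
  proof -
    have "(g ^^ j) x = (g ^^ (j - i + i)) x"
      using that by simp
    also have "\<dots> = (g ^^ (j - i)) ((g ^^ i) x)"
      by (simp add: funpow_add)
    finally have "(g ^^ j) x = (g ^^ (j - i)) ((g ^^ i) x)" .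
    then have "(g ^^ i) x = (g ^^ j) x \<longleftrightarrow> (g ^^ (j - i)) ((g ^^ i) x) = (g ^^ i) x"
      by auto
    also have "\<dots> \<longleftrightarrow> d dvd j - i"
      by (rule funpow_eq_self_iff[OF funpow_in[OF assms]])
    finally show ?thesis
      using mod_eq_dvd_iff_nat[where m=j and n=i and q=d] that by auto
  qed
  show ?thesis
    using *[of i j] *[of j i] by (cases "i \<le> j") auto
qed

definition base :: "nat \<Rightarrow> nat" where
  "base x = Min (orbit g x)"

lemma base_funpow: "base ((g ^^ k) x) = base x"
  unfolding base_def
  by (induction k) (simp_all add: permutation_orbit_step[OF permutation])

lemma base_in_orbit: "base x \<in> orbit g x"
  unfolding base_def
  using finite_orbit[OF permutation_self_in_orbit[OF permutation]] orbit_nonempty by (rule Min_in)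

lemma in_orbit_base: "x \<in> orbit g (base x)"
  using permutation_self_in_orbit[OF permutation] base_in_orbit by (rule orbit_swap)

lemma base_in:
  assumes "x \<in> S" shows "base x \<in> S"
proof -
  obtain k where "base x = (g ^^ k) x"
    using base_in_orbit[of x] unfolding orbit_altdef by blast
  then show ?thesis
    using funpow_in[OF assms] by simp
qed

text \<open>The distance from the base point is already below \<open>d\<close>; reducing it mod \<open>d\<close> just makes
  the range of the phase evident.\<close>

definition phase :: "nat \<Rightarrow> int" where
  "phase x = int (funpow_dist g (base x) x mod d)"

lemma phase_nonneg: "0 \<le> phase x"
  unfolding phase_def by simp

lemma phase_less: "phase x < int d"
  unfolding phase_def using d_pos by simp

definition shift :: "int \<Rightarrow> nat \<Rightarrow> nat" where
  "shift a x = (g ^^ nat (a mod int d)) x"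

lemma shift_in: "x \<in> S \<Longrightarrow> shift a x \<in> S"
  unfolding shift_def by (rule funpow_in)

lemma shift_0 [simp]: "shift 0 x = x"
  unfolding shift_def by simp

lemma shift_cong: "a mod int d = b mod int d \<Longrightarrow> shift a x = shift b x"
  unfolding shift_def by simp

lemma shift_eq_iff:
  assumes "x \<in> S" shows "shift a x = shift b x \<longleftrightarrow> a mod int d = b mod int d"
proof -
  have "nat (c mod int d) < d" for c
    using d_pos by (simp add: nat_less_iff)
  then show ?thesis
    unfolding shift_def funpow_eq_iff_mod_eq[OF assms] using d_pos
    by (simp add: eq_nat_nat_iff)
qed

lemma funpow_eq_shift:
  assumes "x \<in> S" and "0 \<le> a" shows "(g ^^ nat a) x = shift a x"
  unfolding shift_def using assms(2) d_pos
  by (simp add: nat_mod_distrib funpow_mod_eq[OF funpow_cycle_len[OF assms(1)]])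

lemma shift_1:
  assumes "x \<in> S" shows "shift 1 x = g x"
  using funpow_eq_shift[OF assms, of 1] by simp

lemma shift_shift:
  assumes "x \<in> S" shows "shift a (shift b x) = shift (a + b) x"
proof -
  have "shift a (shift b x) = (g ^^ nat (a mod int d + b mod int d)) x"
    unfolding shift_def using d_pos by (simp add: nat_add_distrib funpow_add)
  also have "\<dots> = shift (a mod int d + b mod int d) x"
    using d_pos by (simp add: funpow_eq_shift[OF assms])
  also have "\<dots> = shift (a + b) x"
    by (rule shift_cong) (simp add: mod_simps)
  finally show ?thesis .
qed

lemma shift_phase_base:
  assumes "x \<in> S" shows "shift (phase x) (base x) = x"
proof -
  have "(g ^^ nat (phase x)) (base x) = x"
    unfolding phase_def nat_int
    using funpow_mod_eq[OF funpow_cycle_len[OF base_in[OF assms]]] funpow_dist_prop[OF in_orbit_base]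
    by simp
  then show ?thesis
    using funpow_eq_shift[OF base_in[OF assms] phase_nonneg] by simp
qed

lemma base_shift: "base (shift a x) = base x"
  unfolding shift_def by (rule base_funpow)

lemma phase_shift:
  assumes "x \<in> S" shows "phase (shift a x) = (phase x + a) mod int d"
proof -
  have "shift (phase (shift a x)) (base x) = shift (phase x + a) (base x)"
    using shift_phase_base[OF shift_in[OF assms]] shift_phase_base[OF assms]
      shift_shift[OF base_in[OF assms]]
    by (metis add.commute base_shift)
  then have "phase (shift a x) mod int d = (phase x + a) mod int d"
    using shift_eq_iff[OF base_in[OF assms]] by blast
  then show ?thesis
    using phase_nonneg phase_less by simp
qed

lemma shift_eq_self_iff:
  assumes "x \<in> S" shows "shift a x = x \<longleftrightarrow> int d dvd a"
  using shift_eq_iff[OF assms, of a 0] by (simp add: dvd_eq_mod_eq_0)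

definition cycle_reps :: "nat set" where
  "cycle_reps = {x \<in> S. phase x = 0}"

lemma cycle_reps_subset: "cycle_reps \<subseteq> S"
  unfolding cycle_reps_def by blast

lemma card_phase_fibre:
  assumes "j < d" shows "card {x \<in> S. phase x = int j} = card cycle_reps"
proof -
  have "bij_betw (shift (int j)) {x \<in> S. phase x = 0} {x \<in> S. phase x = int j}"
  proof (rule bij_betw_byWitness[where f' = "shift (- int j)"])
    show "\<forall>x\<in>{x \<in> S. phase x = 0}. shift (- int j) (shift (int j) x) = x"
      "\<forall>x\<in>{x \<in> S. phase x = int j}. shift (int j) (shift (- int j) x) = x"
      by (simp_all add: shift_shift)
    show "shift (int j) ` {x \<in> S. phase x = 0} \<subseteq> {x \<in> S. phase x = int j}"
      "shift (- int j) ` {x \<in> S. phase x = int j} \<subseteq> {x \<in> S. phase x = 0}"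
      using assms by (auto simp: shift_in phase_shift)
  qed
  then show ?thesis
    unfolding cycle_reps_def by (simp add: bij_betw_same_card)
qed

lemma sum_by_phase: "sum h S = (\<Sum>j<d. sum h {x \<in> S. phase x = int j})"
proof -
  have "{x \<in> S. nat (phase x) = j} = {x \<in> S. phase x = int j}" for j
    using phase_nonneg by auto
  moreover have "(\<lambda>x. nat (phase x)) ` S \<subseteq> {..<d}"
    using phase_less by (auto simp: nat_less_iff phase_nonneg)
  ultimately show ?thesis
    using sum.group[OF finite finite_lessThan, where g = "\<lambda>x. nat (phase x)" and h = h] by simp
qed

lemma card_eq_mult_card_cycle_reps: "card S = d * card cycle_reps"
  using sum_by_phase[of "\<lambda>_. 1 :: nat"] by (simp add: card_phase_fibre)

lemma sum_phase: "sum phase S = int (card cycle_reps) * (\<Sum>j<d. int j)"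
proof -
  have "sum phase S = (\<Sum>j<d. int j * int (card {x \<in> S. phase x = int j}))"
    using sum_by_phase[of phase] by (simp add: mult.commute)
  also have "\<dots> = (\<Sum>j<d. int j * int (card cycle_reps))"
    by (rule sum.cong) (simp_all add: card_phase_fibre)
  finally show ?thesis
    by (simp add: sum_distrib_right mult.commute)
qed

end

locale autoparatopic_square = uniform_cycles "{1..n}" g d for n :: nat and g d +
  fixes L :: "(nat \<times> nat \<times> nat) set"
  assumes latin: "latin_square n L"
    and par_closed: "\<And>x y z. (x, y, z) \<in> L \<Longrightarrow> (g z, x, y) \<in> L"
begin

fun par :: "nat \<times> nat \<times> nat \<Rightarrow> nat \<times> nat \<times> nat" where
  "par (x, y, z) = (g z, x, y)"

fun shift_triple :: "int \<Rightarrow> nat \<times> nat \<times> nat \<Rightarrow> nat \<times> nat \<times> nat" where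
  "shift_triple a (x, y, z) = (shift a x, shift a y, shift a z)"

lemma triple_in: "(x, y, z) \<in> L \<Longrightarrow> x \<in> {1..n} \<and> y \<in> {1..n} \<and> z \<in> {1..n}"
  using latin_square_triple_in[OF latin] by blast

lemma g_shift: "x \<in> {1..n} \<Longrightarrow> g (shift a x) = shift a (g x)"
  by (metis add.commute shift_1 shift_in shift_shift)

lemma par_in: "w \<in> L \<Longrightarrow> par w \<in> L"
  by (cases w) (simp add: par_closed)

lemma funpow_triple_in: "(x, y, z) \<in> L \<Longrightarrow> ((g ^^ k) x, (g ^^ k) y, (g ^^ k) z) \<in> L"
proof (induction k)
  case (Suc k)
  then show ?case
    using par_closed[OF par_closed[OF par_closed[OF Suc.IH]]] by simp
qed simp

lemma shift_triple_in: "w \<in> L \<Longrightarrow> shift_triple a w \<in> L"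
  by (cases w) (simp add: shift_def funpow_triple_in)

lemma shift_triple_shift_triple: "w \<in> L \<Longrightarrow> shift_triple a (shift_triple b w) = shift_triple (a + b) w"
  by (cases w) (auto simp: shift_shift dest: triple_in)

lemma par_shift_triple: "w \<in> L \<Longrightarrow> par (shift_triple a w) = shift_triple a (par w)"
  by (cases w) (auto simp: g_shift dest: triple_in)

lemma par_par_par: "w \<in> L \<Longrightarrow> par (par (par w)) = shift_triple 1 w"
  by (cases w) (auto simp: shift_1 dest: triple_in)

lemma shift_triple_par_neq:
  assumes "3 dvd d" and "w \<in> L" shows "shift_triple a (par w) \<noteq> w"
proof
  obtain x y z where w: "w = (x, y, z)"
    by (cases w)
  then have in_n: "x \<in> {1..n}" "y \<in> {1..n}" "z \<in> {1..n}"
    using latin_square_triple_in[OF latin] assms(2) by auto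
  assume "shift_triple a (par w) = w"
  then have "x = shift a (g z)" "y = shift a x" "z = shift a y"
    using w by auto
  then have "x = shift a (shift a (shift a (g x)))"
    using in_n by (simp add: g_shift shift_in)
  also have "\<dots> = shift (3 * a + 1) x"
    using in_n by (simp add: shift_1 [symmetric] shift_shift shift_in algebra_simps)
  finally have "int d dvd 3 * a + 1"
    using shift_eq_self_iff[OF in_n(1)] by metis
  moreover have "(3 :: int) dvd int d"
    using assms(1) by presburger
  ultimately have "(3 :: int) dvd 3 * a + 1"
    by (rule dvd_trans[rotated])
  then show False
    by presburger
qed

text \<open>The row of \<open>par (x, y, z)\<close> is \<open>g z\<close>, of phase \<open>phase z + 1\<close>; shifting back by that amount
  makes it a cycle representative again.\<close>

fun par_norm :: "nat \<times> nat \<times> nat \<Rightarrow> nat \<times> nat \<times> nat" where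
  "par_norm (x, y, z) = shift_triple (- phase z - 1) (par (x, y, z))"

definition base_triples :: "(nat \<times> nat \<times> nat) set" where
  "base_triples = {w \<in> L. phase (fst w) = 0}"

lemma par_norm_in: "w \<in> L \<Longrightarrow> par_norm w \<in> L"
  by (cases w) (simp add: shift_triple_in par_in del: par.simps)

lemma par_norm_phases:
  assumes "(x, y, z) \<in> L" and "par_norm (x, y, z) = (x', y', z')"
  shows "phase x' = 0"
    and "phase y' = (phase x - phase z - 1) mod int d"
    and "phase z' = (phase y - phase z - 1) mod int d"
proof -
  have in_n: "x \<in> {1..n}" "y \<in> {1..n}" "z \<in> {1..n}"
    using triple_in[OF assms(1)] by auto
  have "x' = shift (- phase z - 1) (shift 1 z)" "y' = shift (- phase z - 1) x" "z' = shift (- phase z - 1) y"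
    using assms(2) shift_1[OF in_n(3)] by auto
  then show "phase x' = 0"
    and "phase y' = (phase x - phase z - 1) mod int d"
    and "phase z' = (phase y - phase z - 1) mod int d"
    using in_n by (simp_all add: shift_shift phase_shift shift_in) (simp_all add: algebra_simps)
qed

lemma par_norm_base_triples:
  assumes "w \<in> base_triples" shows "par_norm w \<in> base_triples"
proof -
  obtain x y z where w: "w = (x, y, z)"
    by (cases w)
  obtain x' y' z' where w': "par_norm w = (x', y', z')"
    by (cases "par_norm w")
  have "(x, y, z) \<in> L"
    using assms w unfolding base_triples_def by simp
  then have "phase x' = 0"
    using par_norm_phases(1) w w' by simp
  moreover have "par_norm w \<in> L"
    using assms par_norm_in unfolding base_triples_def by simp
  ultimately show ?thesis
    using w' unfolding base_triples_def by simp
qed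

lemma par_norm_neq:
  assumes "3 dvd d" and "w \<in> L" shows "par_norm w \<noteq> w"
  using shift_triple_par_neq[OF assms] by (cases w) simp

lemma par_norm_shift_triple:
  assumes "v \<in> L" shows "\<exists>b. par_norm (shift_triple a v) = shift_triple (b + a) (par v)"
proof -
  obtain b where "par_norm (shift_triple a v) = shift_triple b (par (shift_triple a v))"
    by (cases "shift_triple a v") simp
  also have "\<dots> = shift_triple (b + a) (par v)"
    using par_shift_triple[OF assms] shift_triple_shift_triple[OF par_in[OF assms]] by simp
  finally show ?thesis ..
qed

lemma par_norm3_eq_shift_triple:
  assumes "w \<in> L" shows "\<exists>a. par_norm (par_norm (par_norm w)) = shift_triple a w"
proof -
  obtain a where a: "par_norm w = shift_triple a (par w)"
    by (cases w) simp
  then obtain b where b: "par_norm (par_norm w) = shift_triple (b + a) (par (par w))"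
    using par_norm_shift_triple[OF par_in[OF assms]] by auto
  then obtain c where "par_norm (par_norm (par_norm w)) = shift_triple (c + (b + a)) (par (par (par w)))"
    using par_norm_shift_triple[OF par_in[OF par_in[OF assms]]] by auto
  also have "\<dots> = shift_triple (c + (b + a) + 1) w"
    using par_par_par[OF assms] shift_triple_shift_triple[OF assms] by simp
  finally show ?thesis ..
qed

lemma shift_triple_base_triples:
  assumes "w \<in> base_triples" and "shift_triple a w \<in> base_triples" shows "shift_triple a w = w"
proof (cases w)
  case (fields x y z)
  then have in_n: "x \<in> {1..n}" "y \<in> {1..n}" "z \<in> {1..n}" and "phase x = 0"
    using assms(1) triple_in unfolding base_triples_def by auto
  then have "phase (shift a x) = a mod int d"
    by (simp add: phase_shift)
  moreover have "phase (shift a x) = 0"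
    using assms(2) fields unfolding base_triples_def by simp
  ultimately have "int d dvd a"
    by presburger
  then show ?thesis
    using fields in_n shift_eq_self_iff by simp
qed

lemma par_norm3:
  assumes "w \<in> base_triples" shows "par_norm (par_norm (par_norm w)) = w"
proof -
  obtain a where a: "par_norm (par_norm (par_norm w)) = shift_triple a w"
    using par_norm3_eq_shift_triple assms unfolding base_triples_def by blast
  moreover have "shift_triple a w \<in> base_triples"
    using a par_norm_base_triples[OF par_norm_base_triples[OF par_norm_base_triples[OF assms]]] by simp
  ultimately show ?thesis
    using shift_triple_base_triples[OF assms] by simp
qed

definition col_phase :: "nat \<times> nat \<times> nat \<Rightarrow> int" where
  "col_phase w = phase (fst (snd w))"

definition sym_phase :: "nat \<times> nat \<times> nat \<Rightarrow> int" where
  "sym_phase w = phase (snd (snd w))"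

lemma par_norm_orbit_sums:
  assumes "w \<in> base_triples"
  shows "(col_phase w + col_phase (par_norm w) + col_phase (par_norm (par_norm w))) mod int d
           = (- 1) mod int d"
    and "((sym_phase w - col_phase w) + (sym_phase (par_norm w) - col_phase (par_norm w))
           + (sym_phase (par_norm (par_norm w)) - col_phase (par_norm (par_norm w)))) mod int d
           = (- 1) mod int d"
proof -
  obtain x y z where w: "w = (x, y, z)"
    by (cases w)
  obtain x1 y1 z1 where w1: "par_norm w = (x1, y1, z1)"
    by (cases "par_norm w")
  obtain x2 y2 z2 where w2: "par_norm (par_norm w) = (x2, y2, z2)"
    by (cases "par_norm (par_norm w)")
  have L: "(x, y, z) \<in> L" "(x1, y1, z1) \<in> L" and "phase x = 0"
    using assms par_norm_in w w1 unfolding base_triples_def by auto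
  obtain k1 where k1: "phase y1 = phase x - phase z - 1 + int d * k1"
    using par_norm_phases(2)[OF L(1) w1[unfolded w]] by (rule eq_modE)
  obtain k2 where k2: "phase z1 = phase y - phase z - 1 + int d * k2"
    using par_norm_phases(3)[OF L(1) w1[unfolded w]] by (rule eq_modE)
  obtain k3 where k3: "phase y2 = phase x1 - phase z1 - 1 + int d * k3"
    using par_norm_phases(2)[OF L(2) w2[unfolded w1]] by (rule eq_modE)
  obtain k4 where k4: "phase z2 = phase y1 - phase z1 - 1 + int d * k4"
    using par_norm_phases(3)[OF L(2) w2[unfolded w1]] by (rule eq_modE)
  have "phase x1 = 0"
    using par_norm_phases(1)[OF L(1) w1[unfolded w]] .
  have "col_phase w + col_phase (par_norm w) + col_phase (par_norm (par_norm w))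
          = - 1 + int d * (k1 - k2 + k3)"
    using k1 k2 k3 \<open>phase x = 0\<close> \<open>phase x1 = 0\<close>
    by (simp add: col_phase_def w w1[unfolded w] w2[unfolded w1] algebra_simps del: par_norm.simps)
  then show "(col_phase w + col_phase (par_norm w) + col_phase (par_norm (par_norm w))) mod int d
           = (- 1) mod int d"
    by (simp add: mod_eq_dvd_iff)
  have "(sym_phase w - col_phase w) + (sym_phase (par_norm w) - col_phase (par_norm w))
           + (sym_phase (par_norm (par_norm w)) - col_phase (par_norm (par_norm w)))
          = - 1 + int d * (k2 - k3 + k4)"
    using k1 k2 k3 k4 \<open>phase x1 = 0\<close>
    by (simp add: col_phase_def sym_phase_def w w1[unfolded w] w2[unfolded w1] algebra_simps
        del: par_norm.simps)
  then show "((sym_phase w - col_phase w) + (sym_phase (par_norm w) - col_phase (par_norm w))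
           + (sym_phase (par_norm (par_norm w)) - col_phase (par_norm (par_norm w)))) mod int d
           = (- 1) mod int d"
    by (simp add: mod_eq_dvd_iff)
qed

lemma base_triples_eq: "base_triples = {w \<in> L. fst w \<in> cycle_reps}"
  unfolding base_triples_def cycle_reps_def by (auto dest: triple_in)

lemma finite_base_triples: "finite base_triples"
proof (rule finite_subset)
  show "base_triples \<subseteq> {1..n} \<times> {1..n} \<times> {1..n}"
    unfolding base_triples_def using latin_squareD(1)[OF latin] by blast
qed simp

lemma card_base_triples: "card base_triples = card cycle_reps * n"
  using sum_latin_square_rows[OF latin cycle_reps_subset latin_square_row_bij_col[OF latin],
      where h = "\<lambda>_. 1 :: nat"]
  by (simp add: base_triples_eq)

lemma sum_col_phase: "sum col_phase base_triples = int (card cycle_reps) * sum phase {1..n}"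
  using sum_latin_square_rows[OF latin cycle_reps_subset latin_square_row_bij_col[OF latin],
      where h = phase]
  by (simp add: base_triples_eq col_phase_def)

lemma sum_sym_phase: "sum sym_phase base_triples = int (card cycle_reps) * sum phase {1..n}"
  using sum_latin_square_rows[OF latin cycle_reps_subset latin_square_row_bij_sym[OF latin],
      where h = phase]
  by (simp add: base_triples_eq sym_phase_def)

lemma base_triples_orbit_count:
  assumes "3 dvd d"
  obtains m where "card base_triples = 3 * m" and "d dvd m" and "int d dvd sum col_phase base_triples"
proof -
  have "par_norm ` base_triples \<subseteq> base_triples"
    using par_norm_base_triples by (rule image_subsetI)
  moreover have "\<forall>w\<in>base_triples. par_norm (par_norm (par_norm w)) = w"
    using par_norm3 by (rule ballI)
  moreover have "\<forall>w\<in>base_triples. par_norm w \<noteq> w"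
    using par_norm_neq[OF assms] unfolding base_triples_def by simp
  ultimately have "\<exists>R\<subseteq>base_triples. card base_triples = 3 * card R \<and>
      (\<forall>F :: _ \<Rightarrow> int. sum F base_triples = (\<Sum>w\<in>R. F w + F (par_norm w) + F (par_norm (par_norm w))))"
    by (rule order3_transversal[OF finite_base_triples])
  then obtain R where "R \<subseteq> base_triples" and card: "card base_triples = 3 * card R"
    and sums: "\<forall>F :: _ \<Rightarrow> int. sum F base_triples
                 = (\<Sum>w\<in>R. F w + F (par_norm w) + F (par_norm (par_norm w)))"
    by (elim exE conjE)
  have orbit_sum_mod: "sum F base_triples mod int d = - int (card R) mod int d"
    if "\<forall>w\<in>base_triples. (F w + F (par_norm w) + F (par_norm (par_norm w))) mod int d = (- 1) mod int d"
    for F :: "nat \<times> nat \<times> nat \<Rightarrow> int"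
  proof -
    have "sum F base_triples mod int d = (\<Sum>w\<in>R. F w + F (par_norm w) + F (par_norm (par_norm w))) mod int d"
      using sums by simp
    also have "\<dots> = (int (card R) * - 1) mod int d"
      using that \<open>R \<subseteq> base_triples\<close> by (intro sum_mod_eq_card_mult) blast
    finally show ?thesis
      by simp
  qed
  have "sum (\<lambda>w. sym_phase w - col_phase w) base_triples = 0"
    by (simp add: sum_subtractf sum_col_phase sum_sym_phase)
  moreover have "sum (\<lambda>w. sym_phase w - col_phase w) base_triples mod int d = - int (card R) mod int d"
    using par_norm_orbit_sums(2) by (intro orbit_sum_mod) (simp add: add.assoc)
  ultimately have "int d dvd int (card R)"
    using mod_eq_dvd_iff[of 0 "int d" "- int (card R)"] by simp
  moreover have "sum col_phase base_triples mod int d = - int (card R) mod int d"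
    using par_norm_orbit_sums(1) by (intro orbit_sum_mod) blast
  then have "int d dvd sum col_phase base_triples + int (card R)"
    by (simp add: mod_eq_dvd_iff)
  ultimately show ?thesis
    using that card by (simp add: dvd_add_left_iff)
qed

lemma three_dvd_card_cycle_reps:
  assumes "3 dvd d" shows "3 dvd card cycle_reps"
proof -
  define c where "c = card cycle_reps"
  obtain m where m: "card base_triples = 3 * m" "d dvd m"
    using base_triples_orbit_count[OF assms] by blast
  then obtain k where k: "m = d * k"
    by blast
  have "n = d * c"
    using card_eq_mult_card_cycle_reps unfolding c_def[symmetric] by simp
  then have "card base_triples = d * (c * c)"
    using card_base_triples unfolding c_def[symmetric] by simp
  then have "d * (c * c) = d * (3 * k)"
    using m(1) k by (metis mult.left_commute)
  then have "c * c = 3 * k"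
    using d_pos by simp
  then show ?thesis
    unfolding c_def[symmetric] by (rule three_dvd_square[OF dvdI])
qed

lemma even_card_cycle_reps:
  assumes "3 dvd d" and "even d" shows "even (card cycle_reps)"
proof -
  let ?c = "int (card cycle_reps)"
  have gauss: "2 * (\<Sum>j<k. int j) = int k * (int k - 1)" for k
    by (induction k) (simp_all add: algebra_simps)
  obtain m where "int d dvd sum col_phase base_triples"
    using base_triples_orbit_count[OF assms(1)] by blast
  moreover have "sum col_phase base_triples = ?c * ?c * (\<Sum>j<d. int j)"
    unfolding sum_col_phase sum_phase by (simp add: ac_simps)
  ultimately have "2 * int d dvd 2 * (?c * ?c * (\<Sum>j<d. int j))"
    by (intro mult_dvd_mono) simp_all
  also have "2 * (?c * ?c * (\<Sum>j<d. int j)) = ?c * ?c * (2 * (\<Sum>j<d. int j))"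
    by (simp add: ac_simps)
  also have "\<dots> = int d * (?c * ?c * (int d - 1))"
    unfolding gauss by (simp add: ac_simps)
  finally have "int d * 2 dvd int d * (?c * ?c * (int d - 1))"
    by (simp add: ac_simps)
  then have "2 dvd ?c * ?c * (int d - 1)"
    using d_pos by simp
  moreover have "odd (int d - 1)"
    using assms(2) d_pos by simp
  ultimately show ?thesis
    by simp
qed

end

theorem theorem5p2:
  fixes d r n :: nat and \<gamma> :: "nat \<Rightarrow> nat"
  assumes "0 < d" and "0 < r" and "n = d * r"
    and "cycle_structure n \<gamma> d r"
    and "in_Par_123 n id id \<gamma>"
  shows "(3 dvd d \<longrightarrow> 3 dvd r) \<and> (6 dvd d \<longrightarrow> 6 dvd r)"
proof -
  obtain L where "latin_square n L" and "para_123 id id \<gamma> L = L"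
    using assms(5) unfolding in_Par_123_def by blast
  then interpret autoparatopic_square n \<gamma> d L
    using assms(1,4) para_123_fixed_closed[of id id \<gamma> L]
    by unfold_locales (auto simp: cycle_structure_def)
  have r: "r = card cycle_reps"
    using card_eq_mult_card_cycle_reps assms(1,3) by simp
  show ?thesis
  proof (intro conjI impI)
    assume "3 dvd d"
    then show "3 dvd r"
      unfolding r by (rule three_dvd_card_cycle_reps)
  next
    assume "6 dvd d"
    then have "3 dvd d" "even d"
      by presburger+
    then have "3 dvd r" "even r"
      unfolding r using three_dvd_card_cycle_reps even_card_cycle_reps by blast+
    then show "6 dvd r"
      by presburger
  qed
qed

end
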